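(* Let $H$ be an additive subgroup of $\mathbb{R}^{n}$ with complex dimension $\widetilde{\mathrm{dim}}(H)=p+ir$. If $p+r<n$, then for every $u\in\mathbb{R}^{n}$ the group $H+\mathbb{Z}u$ is not dense in $\mathbb{R}^{n}$.
   Context: For an additive subgroup $G$ of $\mathbb{R}^n$, $\widetilde{\mathrm{dim}}(G):=p+i(q-p)$ where $p=\max\{\dim V: V\text{ a vector subspace of }\mathbb{R}^n,\ V\subset G\}$ and $q=\dim\mathrm{vect}(G)$, $\mathrm{vect}(G)$ being the real span of $G$. *)

theory Defs
  imports "HOL-Analysis.Analysis"
begin

definition additive_subgroup :: "'a::real_vector set \<Rightarrow> bool" where
  "additive_subgroup G \<longleftrightarrow> 0 \<in> G \<and> (\<forall>x\<in>G. \<forall>y\<in>G. x + y \<in> G) \<and> (\<forall>x\<in>G. - x \<in> G)"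

definition subspace_dim :: "'a::euclidean_space set \<Rightarrow> nat" where
  "subspace_dim G = Max {dim V | V. subspace V \<and> V \<subseteq> G}"

definition span_dim :: "'a::euclidean_space set \<Rightarrow> nat" where
  "span_dim G = dim (span G)"

definition cdim :: "'a::euclidean_space set \<Rightarrow> complex" where
  "cdim G = of_nat (subspace_dim G) + \<i> * (of_nat (span_dim G) - of_nat (subspace_dim G))"

end

theory Submission
  imports Defs
begin

text \<open>Only \<open>p + r\<close>, the dimension of the span of \<open>H\<close>, matters. If \<open>p + r\<close> is less than \<open>n\<close>, some nonzero \<open>w\<close> is orthogonal to \<open>H\<close>, so
  \<open>w \<bullet> (h + k u) = k (w \<bullet> u)\<close>. After rescaling \<open>w\<close> (unless \<open>w \<bullet> u = 0\<close>), the functional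
  \<open>x \<mapsto> w \<bullet> x\<close> is integer valued on \<open>H + \<int> u\<close>, hence on its closure, which therefore
  misses every point where it takes the value \<open>1/2\<close>.\<close>

lemma closure_ne_UNIV_if_inner_Ints:
  fixes S :: "'a::real_inner set"
  assumes "w \<noteq> 0" and "\<And>x. x \<in> S \<Longrightarrow> w \<bullet> x \<in> \<int>"
  shows "closure S \<noteq> UNIV"
proof -
  have closure_sub: "closure S \<subseteq> {x. w \<bullet> x \<in> \<int>}"
  proof (rule closure_minimal)
    show "S \<subseteq> {x. w \<bullet> x \<in> \<int>}" using assms(2) by blast
    show "closed {x. w \<bullet> x \<in> \<int>}"
      using continuous_closed_vimage[OF closed_Ints, of "(\<bullet>) w"]
      by (simp add: vimage_def continuous_intros)
  qed
  define z where "z = (1 / (2 * (w \<bullet> w))) *\<^sub>R w"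
  have "w \<bullet> z = 1 / 2" using assms(1) by (simp add: z_def)
  moreover have "(1 / 2 :: real) \<notin> \<int>"
    using fraction_not_in_Ints[of 2 1, where 'a = real] by simp
  ultimately have "z \<notin> closure S" using closure_sub by (metis mem_Collect_eq subsetD)
  thus ?thesis by blast
qed

lemma closure_add_int_multiples_ne_UNIV:
  fixes H :: "'a::euclidean_space set"
  assumes "dim H < DIM('a)"
  shows "closure {h + of_int k *\<^sub>R u | h k. h \<in> H} \<noteq> UNIV"
proof -
  obtain w :: 'a where "w \<noteq> 0" and w_orth: "\<And>y. y \<in> span H \<Longrightarrow> orthogonal w y"
    using orthogonal_to_subspace_exists[OF assms] by metis
  have w_H: "w \<bullet> h = 0" if "h \<in> H" for h
    using w_orth[OF span_base[OF that]] by (simp add: orthogonal_def)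
  define c where "c = w \<bullet> u"
  have inner_w: "w \<bullet> (h + of_int k *\<^sub>R u) = of_int k * c" if "h \<in> H" for h k
    using w_H[OF that] by (simp add: inner_add_right c_def)
  define v where "v = (if c = 0 then w else (1 / c) *\<^sub>R w)"
  show ?thesis
  proof (rule closure_ne_UNIV_if_inner_Ints)
    show "v \<noteq> 0" using \<open>w \<noteq> 0\<close> by (simp add: v_def)
    fix x assume "x \<in> {h + of_int k *\<^sub>R u | h k. h \<in> H}"
    then obtain h k where "x = h + of_int k *\<^sub>R u" "h \<in> H" by blast
    thus "v \<bullet> x \<in> \<int>" using inner_w by (simp add: v_def)
  qed
qed

lemma span_dim_eq_if_cdim_eq:
  assumes "cdim G = of_nat p + \<i> * of_nat r"
  shows "span_dim G = p + r"
proof -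
  have "Re (cdim G) = p" "Im (cdim G) = r" using assms by simp_all
  hence "subspace_dim G = p" "real (span_dim G) - real (subspace_dim G) = r"
    by (simp_all add: cdim_def)
  thus ?thesis by linarith
qed

theorem corollary1p7:
  fixes H :: "(real ^ 'n) set" and p r :: nat
  assumes "additive_subgroup H"
    and "cdim H = of_nat p + \<i> * of_nat r"
    and "p + r < CARD('n)"
  shows "\<forall>u :: real ^ 'n. closure {h + of_int k *\<^sub>R u | h k. h \<in> H} \<noteq> UNIV"
proof
  fix u :: "real ^ 'n"
  have "dim H < DIM(real ^ 'n)"
    using span_dim_eq_if_cdim_eq[OF assms(2)] assms(3) by (simp add: span_dim_def)
  thus "closure {h + of_int k *\<^sub>R u | h k. h \<in> H} \<noteq> UNIV"
    by (rule closure_add_int_multiples_ne_UNIV)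
qed

end
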